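(* Let $n\geq1$ and let $\mathcal{M}_n$ be the structure defined below. (i) For every automorphism $\sigma$ of $\mathcal{M}_n$ fixing $P$ pointwise there is a unique additive map $F_\sigma:\mathbb{C}\to\mathbb{C}$ with $\sigma(x)=F_\sigma(\pi(x))\star x$ for all $x\in S$, and $\sigma\mapsto F_\sigma$ is a bijection from $\mathrm{Aut}(\mathcal{M}_n/P)$ onto $D_n$. (ii) Every relation $R_n$ is definable (with the same sorts) in the structure $\mathcal{M}_1'=(S,P,\pi,\star,\oplus,\otimes)$, where $\otimes:S\times S\to S$ is $((\alpha,a'),(\beta,b'))\mapsto(\alpha\beta,\alpha b'+\beta a')$; that is, $\mathcal{M}_n$ is a definitional reduct of $\mathcal{M}_1'$.
   Context: For $n\geq1$, $\mathcal{M}_n$ is the two-sorted structure with sort $P=\mathbb{C}$ carrying the full field structure $(\mathbb{C},+,\cdot)$, sort $S=\mathbb{C}\times\mathbb{C}$, the projection $\pi:S\to P$, $(\alpha,a')\mapsto\alpha$, the addition $\oplus$ on $S$, $((\alpha,a'),(\beta,b'))\mapsto(\alpha+\beta,a'+b')$, the action $\star$ of $P$ on $S$, $\beta\star(\alpha,a')=(\alpha,a'+\beta)$, and the $(n+1)$-ary relation $R_n$ on $S$ given by: $R_n((\alpha_1,a_1'),\ldots,(\alpha_{n+1},a_{n+1}'))$ holds iff $\alpha_i=\alpha_1^i$ for all $i\leq n+1$ and $a_{n+1}'=\sum_{i=1}^{n}\binom{n+1}{i}(-1)^{n-i}\alpha_{n+1-i}a_i'$. $D_n$ is the set of additive $F:\mathbb{C}\to\mathbb{C}$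 with $F(\alpha^{n+1})=\sum_{i=1}^{n}\binom{n+1}{i}(-1)^{n-i}\alpha^{n+1-i}F(\alpha^i)$ for all $\alpha\in\mathbb{C}$. *)

theory Defs
  imports Complex_Main
begin

text \<open>Sort S = complex \<times> complex; sort P = complex (full field structure).\<close>

type_synonym sortS = "complex \<times> complex"

definition proj :: "sortS \<Rightarrow> complex" where
  "proj x = fst x"

definition splus :: "sortS \<Rightarrow> sortS \<Rightarrow> sortS" where
  "splus x y = (fst x + fst y, snd x + snd y)"

definition act :: "complex \<Rightarrow> sortS \<Rightarrow> sortS" where
  "act \<beta> x = (fst x, snd x + \<beta>)"

definition stimes :: "sortS \<Rightarrow> sortS \<Rightarrow> sortS" where
  "stimes x y = (fst x * fst y, fst x * snd y + fst y * snd x)"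

text \<open>The (n+1)-ary relation R_n, arguments given as a list x_1,...,x_{n+1}
  (0-based list positions 0..n).\<close>
definition Rel :: "nat \<Rightarrow> sortS list \<Rightarrow> bool" where
  "Rel n xs \<longleftrightarrow> length xs = n + 1 \<and>
     (\<forall>i\<in>{1..n+1}. fst (xs ! (i - 1)) = fst (xs ! 0) ^ i) \<and>
     snd (xs ! n) = (\<Sum>i=1..n. of_nat ((n+1) choose i) * (-1) ^ (n - i)
                        * fst (xs ! (n - i)) * snd (xs ! (i - 1)))"

text \<open>Automorphisms of M_n fixing P pointwise: the P-component is the identity,
  so such an automorphism is a bijection of S preserving \<pi>, \<oplus>, \<star> and R_n.\<close>
definition AutP :: "nat \<Rightarrow> (sortS \<Rightarrow> sortS) set" where
  "AutP n = {\<sigma>. bij \<sigma> \<and>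
     (\<forall>x. proj (\<sigma> x) = proj x) \<and>
     (\<forall>x y. \<sigma> (splus x y) = splus (\<sigma> x) (\<sigma> y)) \<and>
     (\<forall>\<beta> x. \<sigma> (act \<beta> x) = act \<beta> (\<sigma> x)) \<and>
     (\<forall>xs. length xs = n + 1 \<longrightarrow> (Rel n xs \<longleftrightarrow> Rel n (map \<sigma> xs)))}"

definition additive_fun :: "(complex \<Rightarrow> complex) \<Rightarrow> bool" where
  "additive_fun F \<longleftrightarrow> (\<forall>x y. F (x + y) = F x + F y)"

definition Dn :: "nat \<Rightarrow> (complex \<Rightarrow> complex) set" where
  "Dn n = {F. additive_fun F \<and>
     (\<forall>\<alpha>. F (\<alpha> ^ (n+1)) = (\<Sum>i=1..n. of_nat ((n+1) choose i) * (-1) ^ (n - i)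
                        * \<alpha> ^ (n + 1 - i) * F (\<alpha> ^ i)))}"

definition Fsig :: "(sortS \<Rightarrow> sortS) \<Rightarrow> (complex \<Rightarrow> complex)" where
  "Fsig \<sigma> = (THE F. additive_fun F \<and> (\<forall>x. \<sigma> x = act (F (proj x)) x))"

text \<open>First-order two-sorted language of M_1' = (S, P, \<pi>, \<star>, \<oplus>, \<otimes>) with the
  field structure (+, \<cdot>) on P. Variables are indexed by nat, separately per sort.\<close>

datatype pterm = PVar nat | PAdd pterm pterm | PMul pterm pterm | PPi sterm
and sterm = SVar nat | SAdd sterm sterm | SAct pterm sterm | STimes sterm sterm

datatype fm = PEq pterm pterm | SEq sterm sterm | Neg fm | Conj fm fm
  | ExP nat fm | ExS nat fm

primrec evalP :: "(nat \<Rightarrow> complex) \<Rightarrow> (nat \<Rightarrow> sortS) \<Rightarrow> pterm \<Rightarrow> complex"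
  and evalS :: "(nat \<Rightarrow> complex) \<Rightarrow> (nat \<Rightarrow> sortS) \<Rightarrow> sterm \<Rightarrow> sortS" where
  "evalP eP eS (PVar v) = eP v"
| "evalP eP eS (PAdd s t) = evalP eP eS s + evalP eP eS t"
| "evalP eP eS (PMul s t) = evalP eP eS s * evalP eP eS t"
| "evalP eP eS (PPi u) = proj (evalS eP eS u)"
| "evalS eP eS (SVar v) = eS v"
| "evalS eP eS (SAdd s t) = splus (evalS eP eS s) (evalS eP eS t)"
| "evalS eP eS (SAct p s) = act (evalP eP eS p) (evalS eP eS s)"
| "evalS eP eS (STimes s t) = stimes (evalS eP eS s) (evalS eP eS t)"

primrec sat :: "(nat \<Rightarrow> complex) \<Rightarrow> (nat \<Rightarrow> sortS) \<Rightarrow> fm \<Rightarrow> bool" where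
  "sat eP eS (PEq s t) = (evalP eP eS s = evalP eP eS t)"
| "sat eP eS (SEq s t) = (evalS eP eS s = evalS eP eS t)"
| "sat eP eS (Neg \<phi>) = (\<not> sat eP eS \<phi>)"
| "sat eP eS (Conj \<phi> \<psi>) = (sat eP eS \<phi> \<and> sat eP eS \<psi>)"
| "sat eP eS (ExP v \<phi>) = (\<exists>a. sat (eP(v := a)) eS \<phi>)"
| "sat eP eS (ExS v \<phi>) = (\<exists>x. sat eP (eS(v := x)) \<phi>)"

end

theory Submission
  imports Defs
begin

(* An automorphism over P commutes with the action, so it is determined by the images
   (\<alpha>, F \<alpha>) of the points (\<alpha>, 0): it is the shift x \<mapsto> F(\<pi> x) \<star> x, and it preserves \<oplus>
   iff F is additive. A shift leaves first coordinates alone, and on a tuple whose first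
   coordinates are \<alpha>, \<alpha>^2, ..., \<alpha>^(n+1) it changes the two sides of the linear equation of
   R_n by F(\<alpha>^(n+1)) and by the right-hand side of the D_n identity. Hence a shift preserves
   R_n iff F \<in> D_n, which gives the bijection of (i).
   For (ii), the \<otimes>-powers x^m = (\<alpha>^m, m \<alpha>^(m-1) a') make every x_k of such a tuple equal to
   e_k \<star> x_1^k for a unique e_k \<in> P. In the e_k the equation of R_n becomes an equation in
   the field P, since the contributions of a_1' cancel: the sum over i of
   i (n+1 choose i) (-1)^(n-i) equals n+1. *)

definition rel_coeff :: "nat \<Rightarrow> nat \<Rightarrow> complex" where
  "rel_coeff n i = of_nat ((n+1) choose i) * (-1) ^ (n - i)"

definition Dn_law :: "nat \<Rightarrow> (complex \<Rightarrow> complex) \<Rightarrow> bool" where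
  "Dn_law n F \<longleftrightarrow>
     (\<forall>\<alpha>. F (\<alpha> ^ (n+1)) = (\<Sum>i=1..n. rel_coeff n i * \<alpha> ^ (n + 1 - i) * F (\<alpha> ^ i)))"

lemma Dn_eq: "Dn n = {F. additive_fun F \<and> Dn_law n F}"
  by (simp add: Dn_def Dn_law_def rel_coeff_def)

definition shift :: "(complex \<Rightarrow> complex) \<Rightarrow> sortS \<Rightarrow> sortS" where
  "shift F x = act (F (proj x)) x"

lemma shift_apply: "shift F x = (fst x, snd x + F (fst x))"
  by (simp add: shift_def act_def proj_def)

lemma shift_inject: "shift F = shift G \<longleftrightarrow> F = G"
proof
  assume "shift F = shift G"
  then have "\<And>a. shift F (a, 0) = shift G (a, 0)" by simp
  then show "F = G" by (simp add: fun_eq_iff shift_apply)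
qed simp

lemma act_representation_iff: "(\<forall>x. \<sigma> x = act (F (proj x)) x) \<longleftrightarrow> \<sigma> = shift F"
  by (simp add: fun_eq_iff shift_def)

lemma Fsig_shift: "additive_fun F \<Longrightarrow> Fsig (shift F) = F"
  unfolding Fsig_def act_representation_iff shift_inject by (rule the_equality) auto

lemma bij_shift: "bij (shift F)"
  by (rule o_bij[of "shift (\<lambda>a. - F a)"]) (auto simp: shift_apply fun_eq_iff)

lemma shift_splus_iff_additive:
  "(\<forall>x y. shift F (splus x y) = splus (shift F x) (shift F y)) \<longleftrightarrow> additive_fun F"
proof
  assume "\<forall>x y. shift F (splus x y) = splus (shift F x) (shift F y)"
  then have "\<And>a b. shift F (splus (a, 0) (b, 0)) = splus (shift F (a, 0)) (shift F (b, 0))" by blast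
  then show "additive_fun F" by (simp add: additive_fun_def shift_apply splus_def)
qed (simp add: additive_fun_def shift_apply splus_def)

lemma AutP_eq_shift:
  assumes "\<sigma> \<in> AutP n"
  shows "\<sigma> = shift (\<lambda>a. snd (\<sigma> (a, 0)))"
proof
  fix x :: sortS
  have "\<sigma> x = \<sigma> (act (snd x) (fst x, 0))" by (simp add: act_def)
  also have "\<dots> = act (snd x) (\<sigma> (fst x, 0))" using assms by (simp add: AutP_def)
  finally show "\<sigma> x = shift (\<lambda>a. snd (\<sigma> (a, 0))) x"
    using assms by (simp add: AutP_def proj_def act_def shift_apply prod_eq_iff)
qed

lemma Rel_iff:
  "Rel n xs \<longleftrightarrow> length xs = n + 1 \<and> (\<forall>j\<le>n. fst (xs ! j) = fst (xs ! 0) ^ Suc j) \<and>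
     snd (xs ! n) = (\<Sum>i=1..n. rel_coeff n i * fst (xs ! 0) ^ (n + 1 - i) * snd (xs ! (i - 1)))"
proof -
  let ?\<alpha> = "fst (xs ! 0)"
  have powers: "(\<forall>i\<in>{1..n+1}. fst (xs ! (i - 1)) = ?\<alpha> ^ i)
      \<longleftrightarrow> (\<forall>j\<le>n. fst (xs ! j) = ?\<alpha> ^ Suc j)"
  proof
    assume "\<forall>i\<in>{1..n+1}. fst (xs ! (i - 1)) = ?\<alpha> ^ i"
    then show "\<forall>j\<le>n. fst (xs ! j) = ?\<alpha> ^ Suc j"
      by (metis Suc_eq_plus1 Suc_le_mono atLeastAtMost_iff diff_Suc_1 le_add2)
  next
    assume powers: "\<forall>j\<le>n. fst (xs ! j) = ?\<alpha> ^ Suc j"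
    show "\<forall>i\<in>{1..n+1}. fst (xs ! (i - 1)) = ?\<alpha> ^ i"
    proof
      fix i assume "i \<in> {1..n+1}"
      then obtain j where "i = Suc j" "j \<le> n" by (cases i) auto
      then show "fst (xs ! (i - 1)) = ?\<alpha> ^ i" using powers[rule_format, of j] by simp
    qed
  qed
  have sums: "(\<Sum>i=1..n. rel_coeff n i * fst (xs ! (n - i)) * snd (xs ! (i - 1)))
      = (\<Sum>i=1..n. rel_coeff n i * ?\<alpha> ^ (n + 1 - i) * snd (xs ! (i - 1)))"
    if powers: "\<forall>j\<le>n. fst (xs ! j) = ?\<alpha> ^ Suc j"
  proof (rule sum.cong)
    fix i assume "i \<in> {1..n}"
    then have "fst (xs ! (n - i)) = ?\<alpha> ^ (n + 1 - i)"
      using powers[rule_format, of "n - i"] by (simp add: Suc_diff_le)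
    then show "rel_coeff n i * fst (xs ! (n - i)) * snd (xs ! (i - 1))
        = rel_coeff n i * ?\<alpha> ^ (n + 1 - i) * snd (xs ! (i - 1))" by simp
  qed simp
  show ?thesis
  proof (cases "\<forall>j\<le>n. fst (xs ! j) = ?\<alpha> ^ Suc j")
    case True
    then show ?thesis unfolding Rel_def rel_coeff_def[symmetric] powers sums[OF True] by blast
  next
    case False
    then show ?thesis unfolding Rel_def rel_coeff_def[symmetric] powers by blast
  qed
qed

lemma Rel_of_powers_iff:
  assumes len: "length xs = n + 1" and xs: "\<And>j. j \<le> n \<Longrightarrow> xs ! j = (\<alpha> ^ Suc j, \<beta> j)"
  shows "Rel n xs \<longleftrightarrow>
    \<beta> n = (\<Sum>i=1..n. rel_coeff n i * \<alpha> ^ (n + 1 - i) * \<beta> (i - 1))"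
proof -
  have "fst (xs ! 0) = \<alpha>" using xs[of 0] by simp
  moreover have "\<forall>j\<le>n. fst (xs ! j) = \<alpha> ^ Suc j" using xs by simp
  moreover have "(\<Sum>i=1..n. rel_coeff n i * \<alpha> ^ (n + 1 - i) * snd (xs ! (i - 1)))
      = (\<Sum>i=1..n. rel_coeff n i * \<alpha> ^ (n + 1 - i) * \<beta> (i - 1))"
  proof (intro sum.cong refl)
    fix i assume "i \<in> {1..n}"
    then have "i - 1 \<le> n" by auto
    then show "rel_coeff n i * \<alpha> ^ (n + 1 - i) * snd (xs ! (i - 1))
        = rel_coeff n i * \<alpha> ^ (n + 1 - i) * \<beta> (i - 1)"
      by (simp add: xs)
  qed
  ultimately show ?thesis unfolding Rel_iff using len xs[of n] by simp
qed

lemma Rel_map_shift_iff: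
  assumes "Dn_law n F"
  shows "Rel n (map (shift F) xs) \<longleftrightarrow> Rel n xs"
proof (cases "length xs = n + 1")
  case len: True
  let ?ys = "map (shift F) xs" and ?\<alpha> = "fst (xs ! 0)"
  let ?c = "\<lambda>i. rel_coeff n i * ?\<alpha> ^ (n + 1 - i)"
  have same_shape: "(\<forall>j\<le>n. fst (?ys ! j) = ?\<alpha> ^ Suc j)
      \<longleftrightarrow> (\<forall>j\<le>n. fst (xs ! j) = ?\<alpha> ^ Suc j)"
    using len by (simp add: shift_apply)
  have shifted_eq_iff: "snd (?ys ! n) = (\<Sum>i=1..n. ?c i * snd (?ys ! (i - 1)))
      \<longleftrightarrow> snd (xs ! n) = (\<Sum>i=1..n. ?c i * snd (xs ! (i - 1)))"
    if powers: "\<forall>j\<le>n. fst (xs ! j) = ?\<alpha> ^ Suc j"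
  proof -
    have ys_snd: "snd (?ys ! j) = snd (xs ! j) + F (?\<alpha> ^ Suc j)" if "j \<le> n" for j
      using len that powers[rule_format, OF that] by (simp add: shift_apply)
    have "(\<Sum>i=1..n. ?c i * snd (?ys ! (i - 1)))
        = (\<Sum>i=1..n. ?c i * snd (xs ! (i - 1))) + (\<Sum>i=1..n. ?c i * F (?\<alpha> ^ i))"
      unfolding sum.distrib[symmetric]
    proof (intro sum.cong refl)
      fix i assume "i \<in> {1..n}"
      then have "i - 1 \<le> n" "Suc (i - 1) = i" by auto
      then show "?c i * snd (?ys ! (i - 1)) = ?c i * snd (xs ! (i - 1)) + ?c i * F (?\<alpha> ^ i)"
        using ys_snd[of "i - 1"] by (simp add: distrib_left)
    qed
    moreover have "snd (?ys ! n) = snd (xs ! n) + (\<Sum>i=1..n. ?c i * F (?\<alpha> ^ i))"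
      using assms ys_snd[of n] by (simp add: Dn_law_def)
    ultimately show ?thesis by simp
  qed
  have ys0: "fst (?ys ! 0) = ?\<alpha>" using len by (simp add: shift_apply)
  show ?thesis
  proof (cases "\<forall>j\<le>n. fst (xs ! j) = ?\<alpha> ^ Suc j")
    case True
    show ?thesis unfolding Rel_iff length_map ys0 same_shape shifted_eq_iff[OF True] ..
  next
    case False
    then show ?thesis unfolding Rel_iff length_map ys0 same_shape by (simp only: simp_thms)
  qed
next
  case False
  then show ?thesis unfolding Rel_iff length_map by (simp only: simp_thms)
qed

lemma shift_preserves_Rel_iff:
  "(\<forall>xs. length xs = n + 1 \<longrightarrow> (Rel n xs \<longleftrightarrow> Rel n (map (shift F) xs))) \<longleftrightarrow> Dn_law n F"
proof
  assume preserves: "\<forall>xs. length xs = n + 1 \<longrightarrow> (Rel n xs \<longleftrightarrow> Rel n (map (shift F) xs))"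
  show "Dn_law n F"
    unfolding Dn_law_def
  proof
    fix \<alpha> :: complex
    define xs where "xs = map (\<lambda>j. (\<alpha> ^ Suc j, 0::complex)) [0..<n+1]"
    have len: "length xs = n + 1" by (simp add: xs_def)
    have "Rel n xs"
      by (rule Rel_of_powers_iff[where \<alpha> = \<alpha> and \<beta> = "\<lambda>_. 0", THEN iffD2])
        (auto simp: xs_def len simp del: upt_Suc)
    moreover have "Rel n (map (shift F) xs) \<longleftrightarrow>
        F (\<alpha> ^ Suc n) = (\<Sum>i=1..n. rel_coeff n i * \<alpha> ^ (n + 1 - i) * F (\<alpha> ^ Suc (i - 1)))"
      by (rule Rel_of_powers_iff[where \<alpha> = \<alpha> and \<beta> = "\<lambda>j. F (\<alpha> ^ Suc j)"])
        (auto simp: xs_def shift_apply simp del: upt_Suc)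
    ultimately have "F (\<alpha> ^ Suc n)
        = (\<Sum>i=1..n. rel_coeff n i * \<alpha> ^ (n + 1 - i) * F (\<alpha> ^ Suc (i - 1)))"
      using preserves len by blast
    also have "\<dots> = (\<Sum>i=1..n. rel_coeff n i * \<alpha> ^ (n + 1 - i) * F (\<alpha> ^ i))"
      by (intro sum.cong refl) simp
    finally show "F (\<alpha> ^ (n+1)) = (\<Sum>i=1..n. rel_coeff n i * \<alpha> ^ (n + 1 - i) * F (\<alpha> ^ i))"
      by simp
  qed
qed (simp add: Rel_map_shift_iff)

lemma shift_in_AutP_iff: "shift F \<in> AutP n \<longleftrightarrow> F \<in> Dn n"
proof -
  have "\<forall>x. proj (shift F x) = proj x" by (simp add: shift_apply proj_def)
  moreover have "\<forall>\<beta> x. shift F (act \<beta> x) = act \<beta> (shift F x)" by (simp add: shift_apply act_def)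
  ultimately show ?thesis
    unfolding AutP_def Dn_eq mem_Collect_eq shift_splus_iff_additive shift_preserves_Rel_iff
    using bij_shift by blast
qed

lemma AutP_eq_image_shift: "AutP n = shift ` Dn n"
proof (intro set_eqI iffI)
  fix \<sigma> assume \<sigma>: "\<sigma> \<in> AutP n"
  then have "\<sigma> = shift (\<lambda>a. snd (\<sigma> (a, 0)))" by (rule AutP_eq_shift)
  moreover from \<sigma> this have "(\<lambda>a. snd (\<sigma> (a, 0))) \<in> Dn n" by (metis shift_in_AutP_iff)
  ultimately show "\<sigma> \<in> shift ` Dn n" by blast
qed (auto simp: shift_in_AutP_iff)

lemma sum_choose_alternating_times_index:
  assumes "n \<ge> 1"
  shows "(\<Sum>i=1..n. of_nat ((n+1) choose i) * (-1) ^ (n - i) * of_nat i)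
    = (of_nat (n+1) :: 'a::comm_ring_1)"
proof -
  have "(\<Sum>k\<le>n. of_nat (n choose k) * (-1) ^ (n - k)) = (1 + (-1) :: 'a) ^ n"
    using binomial_ring[of "1::'a" "-1" n] by simp
  also have "\<dots> = 0" using assms by (simp add: zero_power)
  finally have "(\<Sum>k<n. of_nat (n choose k) * (-1) ^ (n - k)) = (-1 :: 'a)"
    by (simp add: lessThan_Suc_atMost[symmetric] eq_neg_iff_add_eq_0)
  moreover have "(\<Sum>k<n. of_nat (n choose k) * (-1) ^ (n - k))
      = - (\<Sum>k<n. of_nat (n choose k) * (-1) ^ (n - Suc k) :: 'a)"
    unfolding sum_negf[symmetric]
  proof (intro sum.cong refl)
    fix k assume "k \<in> {..<n}"
    then have "n - k = Suc (n - Suc k)" by simp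
    then show "of_nat (n choose k) * (-1) ^ (n - k)
        = - (of_nat (n choose k) * (-1) ^ (n - Suc k) :: 'a)"
      by simp
  qed
  ultimately have alt: "(\<Sum>k<n. of_nat (n choose k) * (-1) ^ (n - Suc k)) = (1 :: 'a)"
    by simp
  have "(\<Sum>i=1..n. of_nat ((n+1) choose i) * (-1) ^ (n - i) * of_nat i)
      = (\<Sum>k<n. of_nat (Suc n choose Suc k) * (-1) ^ (n - Suc k) * of_nat (Suc k) :: 'a)"
    using sum.atLeast1_atMost_eq[of
        "\<lambda>i. of_nat ((n+1) choose i) * (-1) ^ (n - i) * (of_nat i :: 'a)" n]
    by simp
  also have "\<dots> = of_nat (n+1) * (\<Sum>k<n. of_nat (n choose k) * (-1) ^ (n - Suc k))"
    unfolding sum_distrib_left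
  proof (intro sum.cong refl)
    fix k
    let ?s = "(-1) ^ (n - Suc k) :: 'a"
    have "of_nat (Suc n choose Suc k) * ?s * of_nat (Suc k)
        = (of_nat (Suc k * (Suc n choose Suc k))) * ?s" by (simp only: of_nat_mult mult_ac)
    also have "\<dots> = of_nat (n+1) * (of_nat (n choose k) * ?s)"
      unfolding Suc_times_binomial by (simp add: algebra_simps)
    finally show "of_nat (Suc n choose Suc k) * ?s * of_nat (Suc k)
        = of_nat (n+1) * (of_nat (n choose k) * ?s)" .
  qed
  finally show ?thesis using alt by simp
qed

fun stimes_power :: "nat \<Rightarrow> sterm" where
  "stimes_power 0 = SVar 0"
| "stimes_power (Suc k) = STimes (stimes_power k) (SVar 0)"

lemma evalS_stimes_power:
  "evalS eP eS (stimes_power k)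
    = (fst (eS 0) ^ Suc k, of_nat (Suc k) * fst (eS 0) ^ k * snd (eS 0))"
  by (induction k) (auto simp: stimes_def algebra_simps)

fun pnum :: "nat \<Rightarrow> pterm" where
  "pnum 0 = PVar 0"
| "pnum (Suc k) = PAdd (pnum k) (PVar 1)"

fun ppow :: "pterm \<Rightarrow> nat \<Rightarrow> pterm" where
  "ppow t 0 = PVar 1"
| "ppow t (Suc k) = PMul (ppow t k) t"

fun psum :: "pterm list \<Rightarrow> pterm" where
  "psum [] = PVar 0"
| "psum (t # ts) = PAdd t (psum ts)"

lemma evalP_pnum: "eP 0 = 0 \<Longrightarrow> eP 1 = 1 \<Longrightarrow> evalP eP eS (pnum k) = of_nat k"
  by (induction k) auto

lemma evalP_ppow: "eP 1 = 1 \<Longrightarrow> evalP eP eS (ppow t k) = evalP eP eS t ^ k"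
  by (induction k) auto

lemma evalP_psum: "eP 0 = 0 \<Longrightarrow> evalP eP eS (psum ts) = (\<Sum>t\<leftarrow>ts. evalP eP eS t)"
  by (induction ts) auto

definition consts_fm :: fm where
  "consts_fm = Conj (PEq (PAdd (PVar 0) (PVar 0)) (PVar 0))
     (Conj (Conj (PEq (PMul (PVar 1) (PVar 1)) (PVar 1)) (Neg (PEq (PVar 1) (PVar 0))))
        (PEq (PAdd (PVar 2) (PVar 1)) (PVar 0)))"

lemma sat_consts_fm: "sat eP eS consts_fm \<longleftrightarrow> eP 0 = 0 \<and> eP 1 = 1 \<and> eP 2 = -1"
proof
  assume "sat eP eS consts_fm"
  then have "eP 0 + eP 0 = eP 0" "eP 1 * eP 1 = eP 1" "eP 1 \<noteq> eP 0" "eP 2 + eP 1 = eP 0"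
    unfolding consts_fm_def sat.simps evalP.simps by blast+
  then show "eP 0 = 0 \<and> eP 1 = 1 \<and> eP 2 = -1"
    by (auto simp: eq_neg_iff_add_eq_0)
qed (simp add: consts_fm_def)

lemma sat_ExP_consts_fm:
  "sat eP eS (ExP 0 (ExP 1 (ExP 2 (Conj consts_fm \<phi>))))
    \<longleftrightarrow> sat (eP(0 := 0, 1 := 1, 2 := -1)) eS \<phi>"
  by (auto simp: sat_consts_fm)

(* With x_k = eS (k - 1), the argument x_(k+1) equals pow_offset eS k \<star> x_1^(k+1), where the
   power is taken with respect to \<otimes>. *)
definition pow_offset :: "(nat \<Rightarrow> sortS) \<Rightarrow> nat \<Rightarrow> complex" where
  "pow_offset eS k = snd (eS k) - of_nat (Suc k) * fst (eS 0) ^ k * snd (eS 0)"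

(* Variable layout: P-variables 0, 1, 2 hold 0, 1, -1 (the language has no constants) and
   P-variable 3 + k holds pow_offset eS k; S-variable k is the (k+1)-st argument of R_n. *)
definition rel_summand :: "nat \<Rightarrow> nat \<Rightarrow> pterm" where
  "rel_summand n i = PMul (PMul (PMul (pnum ((n+1) choose i)) (ppow (PVar 2) (n - i)))
      (ppow (PPi (SVar 0)) (n + 1 - i))) (PVar (2 + i))"

definition rel_eq_fm :: "nat \<Rightarrow> fm" where
  "rel_eq_fm n = PEq (PVar (3 + n)) (psum (map (rel_summand n) [1..<n+1]))"

fun offsets_fm :: "nat \<Rightarrow> nat \<Rightarrow> fm" where
  "offsets_fm n 0 = rel_eq_fm n"
| "offsets_fm n (Suc k) =
     ExP (3 + k) (Conj (SEq (SVar k) (SAct (PVar (3 + k)) (stimes_power k))) (offsets_fm n k))"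

definition Rel_fm :: "nat \<Rightarrow> fm" where
  "Rel_fm n = ExP 0 (ExP 1 (ExP 2 (Conj consts_fm (offsets_fm n (n + 1)))))"

definition offset_env ::
    "(nat \<Rightarrow> complex) \<Rightarrow> (nat \<Rightarrow> sortS) \<Rightarrow> nat \<Rightarrow> nat \<Rightarrow> complex" where
  "offset_env eP eS k v = (if 3 \<le> v \<and> v < 3 + k then pow_offset eS (v - 3) else eP v)"

lemma sat_rel_eq_fm:
  assumes "eP 0 = 0" "eP 1 = 1" "eP 2 = -1"
  shows "sat eP eS (rel_eq_fm n) \<longleftrightarrow> eP (3 + n) =
    (\<Sum>i=1..n. rel_coeff n i * fst (eS 0) ^ (n + 1 - i) * eP (2 + i))"
proof -
  have "evalP eP eS (psum (map (rel_summand n) [1..<n+1]))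
      = (\<Sum>i\<in>{1..<n+1}. evalP eP eS (rel_summand n i))"
    using assms
    by (simp add: evalP_psum sum_set_upt_conv_sum_list_nat[symmetric] comp_def del: upt_Suc)
  also have "\<dots> = (\<Sum>i=1..n. rel_coeff n i * fst (eS 0) ^ (n + 1 - i) * eP (2 + i))"
    using assms by (simp add: atLeastLessThanSuc_atLeastAtMost rel_summand_def rel_coeff_def
        evalP_pnum evalP_ppow proj_def)
  finally show ?thesis by (simp add: rel_eq_fm_def)
qed

lemma sat_offsets_fm:
  "sat eP eS (offsets_fm n k) \<longleftrightarrow>
     (\<forall>j<k. fst (eS j) = fst (eS 0) ^ Suc j) \<and> sat (offset_env eP eS k) eS (rel_eq_fm n)"
proof (induction k arbitrary: eP)
  case 0
  have "offset_env eP eS 0 = eP" by (auto simp: fun_eq_iff offset_env_def)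
  then show ?case by simp
next
  case (Suc k)
  have offset_k: "sat (eP(3 + k := a)) eS (SEq (SVar k) (SAct (PVar (3 + k)) (stimes_power k)))
      \<longleftrightarrow> fst (eS k) = fst (eS 0) ^ Suc k \<and> a = pow_offset eS k" for a
    by (auto simp: evalS_stimes_power act_def pow_offset_def prod_eq_iff)
  have env: "offset_env (eP(3 + k := pow_offset eS k)) eS k = offset_env eP eS (Suc k)"
    by (auto simp: offset_env_def fun_eq_iff)
  have "sat eP eS (offsets_fm n (Suc k)) \<longleftrightarrow> (\<exists>a.
      sat (eP(3 + k := a)) eS (SEq (SVar k) (SAct (PVar (3 + k)) (stimes_power k)))
      \<and> sat (eP(3 + k := a)) eS (offsets_fm n k))"
    by simp
  also have "\<dots> \<longleftrightarrow> fst (eS k) = fst (eS 0) ^ Suc k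
      \<and> sat (eP(3 + k := pow_offset eS k)) eS (offsets_fm n k)"
    unfolding offset_k by blast
  also have "\<dots> \<longleftrightarrow> (\<forall>j<Suc k. fst (eS j) = fst (eS 0) ^ Suc j)
      \<and> sat (offset_env eP eS (Suc k)) eS (rel_eq_fm n)"
    unfolding Suc.IH env by (auto simp: less_Suc_eq)
  finally show ?case .
qed

lemma sat_Rel_fm:
  "sat eP eS (Rel_fm n) \<longleftrightarrow> (\<forall>j\<le>n. fst (eS j) = fst (eS 0) ^ Suc j) \<and>
     pow_offset eS n = (\<Sum>i=1..n. rel_coeff n i * fst (eS 0) ^ (n + 1 - i) * pow_offset eS (i - 1))"
proof -
  let ?e = "offset_env (eP(0 := 0, 1 := 1, 2 := -1)) eS (n + 1)"
  have constants: "?e 0 = 0" "?e 1 = 1" "?e 2 = -1" by (simp_all add: offset_env_def)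
  have offsets: "?e (3 + j) = pow_offset eS j" if "j \<le> n" for j
    using that by (simp add: offset_env_def)
  have "sat eP eS (Rel_fm n)
      \<longleftrightarrow> (\<forall>j<n+1. fst (eS j) = fst (eS 0) ^ Suc j) \<and> sat ?e eS (rel_eq_fm n)"
    unfolding Rel_fm_def sat_ExP_consts_fm sat_offsets_fm ..
  also have "sat ?e eS (rel_eq_fm n) \<longleftrightarrow> pow_offset eS n = (\<Sum>i=1..n. rel_coeff n i * fst (eS 0) ^ (n + 1 - i) * ?e (2 + i))"
    unfolding sat_rel_eq_fm[OF constants] offsets[OF order_refl] ..
  also have "(\<Sum>i=1..n. rel_coeff n i * fst (eS 0) ^ (n + 1 - i) * ?e (2 + i))
      = (\<Sum>i=1..n. rel_coeff n i * fst (eS 0) ^ (n + 1 - i) * pow_offset eS (i - 1))"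
  proof (intro sum.cong refl)
    fix i assume "i \<in> {1..n}"
    then have "2 + i = 3 + (i - 1)" "i - 1 \<le> n" by auto
    then show "rel_coeff n i * fst (eS 0) ^ (n + 1 - i) * ?e (2 + i)
        = rel_coeff n i * fst (eS 0) ^ (n + 1 - i) * pow_offset eS (i - 1)"
      by (simp only: offsets)
  qed
  finally show ?thesis by (simp add: less_Suc_eq_le)
qed

lemma Rel_iff_pow_offset:
  assumes "n \<ge> 1"
  shows "Rel n (map eS [0..<n+1]) \<longleftrightarrow> (\<forall>j\<le>n. fst (eS j) = fst (eS 0) ^ Suc j) \<and>
     pow_offset eS n = (\<Sum>i=1..n. rel_coeff n i * fst (eS 0) ^ (n + 1 - i) * pow_offset eS (i - 1))"
proof (cases "\<forall>j\<le>n. fst (eS j) = fst (eS 0) ^ Suc j")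
  case shape: True
  let ?\<alpha> = "fst (eS 0)" and ?a = "snd (eS 0)"
  let ?c = "\<lambda>i. rel_coeff n i * ?\<alpha> ^ (n + 1 - i)"
  have snd_eq: "snd (eS k) = pow_offset eS k + of_nat (Suc k) * ?\<alpha> ^ k * ?a" for k
    by (simp add: pow_offset_def)
  have "(\<Sum>i=1..n. ?c i * snd (eS (i - 1))) = (\<Sum>i=1..n. ?c i * pow_offset eS (i - 1)
      + rel_coeff n i * of_nat i * (?\<alpha> ^ n * ?a))"
  proof (intro sum.cong refl)
    fix i assume "i \<in> {1..n}"
    then have "Suc (i - 1) = i" and split_n: "?\<alpha> ^ n = ?\<alpha> ^ (n + 1 - i) * ?\<alpha> ^ (i - 1)"
      by (auto simp flip: power_add)
    then show "?c i * snd (eS (i - 1)) = ?c i * pow_offset eS (i - 1)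
        + rel_coeff n i * of_nat i * (?\<alpha> ^ n * ?a)"
      unfolding snd_eq[of "i - 1"] split_n by (simp add: algebra_simps)
  qed
  also have "\<dots> = (\<Sum>i=1..n. ?c i * pow_offset eS (i - 1))
      + (\<Sum>i=1..n. rel_coeff n i * of_nat i) * (?\<alpha> ^ n * ?a)"
    by (simp only: sum.distrib sum_distrib_right)
  also have "\<dots> = (\<Sum>i=1..n. ?c i * pow_offset eS (i - 1)) + of_nat (n+1) * (?\<alpha> ^ n * ?a)"
    by (simp only: rel_coeff_def sum_choose_alternating_times_index[OF assms])
  finally have sum_eq: "(\<Sum>i=1..n. ?c i * snd (eS (i - 1)))
      = (\<Sum>i=1..n. ?c i * pow_offset eS (i - 1)) + of_nat (n+1) * (?\<alpha> ^ n * ?a)" .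
  have "Rel n (map eS [0..<n+1]) \<longleftrightarrow> snd (eS n) = (\<Sum>i=1..n. ?c i * snd (eS (i - 1)))"
  proof (rule Rel_of_powers_iff)
    fix j assume "j \<le> n"
    moreover have "map eS [0..<n+1] ! j = eS j" using \<open>j \<le> n\<close> by (simp del: upt_Suc)
    ultimately show "map eS [0..<n+1] ! j = (?\<alpha> ^ Suc j, snd (eS j))"
      using shape[rule_format, OF \<open>j \<le> n\<close>] by (simp add: prod_eq_iff)
  qed simp
  also have "\<dots> \<longleftrightarrow> pow_offset eS n = (\<Sum>i=1..n. ?c i * pow_offset eS (i - 1))"
    unfolding sum_eq snd_eq[of n] by (simp add: mult.assoc)
  finally show ?thesis using shape by blast
next
  case False
  have "\<not> Rel n (map eS [0..<n+1])"
  proof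
    assume "Rel n (map eS [0..<n+1])"
    then have powers: "\<forall>j\<le>n. fst (map eS [0..<n+1] ! j) = fst (map eS [0..<n+1] ! 0) ^ Suc j"
      unfolding Rel_iff by blast
    have "fst (eS j) = fst (eS 0) ^ Suc j" if "j \<le> n" for j
      using powers[rule_format, OF that] that by (simp del: upt_Suc)
    with False show False by blast
  qed
  with False show ?thesis by blast
qed

theorem mainTheorem10:
  fixes n :: nat
  assumes "n \<ge> 1"
  shows "(\<forall>\<sigma>\<in>AutP n. \<exists>!F. additive_fun F \<and> (\<forall>x. \<sigma> x = act (F (proj x)) x))
       \<and> bij_betw Fsig (AutP n) (Dn n)
       \<and> (\<exists>\<phi>::fm. \<forall>eP eS. sat eP eS \<phi> \<longleftrightarrow> Rel n (map eS [0..<n+1]))"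
proof -
  have "\<forall>\<sigma>\<in>AutP n. \<exists>!F. additive_fun F \<and> (\<forall>x. \<sigma> x = act (F (proj x)) x)"
    unfolding act_representation_iff AutP_eq_image_shift by (auto simp: shift_inject Dn_eq)
  moreover have "bij_betw Fsig (AutP n) (Dn n)"
  proof (rule bij_betw_byWitness[where f' = shift])
    show "\<forall>\<sigma>\<in>AutP n. shift (Fsig \<sigma>) = \<sigma>" "Fsig ` AutP n \<subseteq> Dn n"
      unfolding AutP_eq_image_shift by (auto simp: Fsig_shift Dn_eq)
    show "\<forall>F\<in>Dn n. Fsig (shift F) = F" by (simp add: Fsig_shift Dn_eq)
    show "shift ` Dn n \<subseteq> AutP n" unfolding AutP_eq_image_shift ..
  qed
  moreover have "\<forall>eP eS. sat eP eS (Rel_fm n) \<longleftrightarrow> Rel n (map eS [0..<n+1])"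
    using Rel_iff_pow_offset[OF assms] sat_Rel_fm by simp
  ultimately show ?thesis by blast
qed

end
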